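(* Let $n\geq2$. For $\sigma>0$ let $u_\sigma:[0,\infty)\to\mathbb{R}^+$ denote the unique smooth solution of $$u''(x)=\Big[\frac{xu'(x)-u(x)}{2}+\frac{n-1}{u(x)}\Big]\big(1+(u'(x))^2\big)$$ that is asymptotic to the ray $x\mapsto\sigma x$ as $x\to+\infty$. Then for all sufficiently large $\sigma>0$, $u_\sigma$ has positive slope ($u_\sigma'>0$) on $[0,\infty)$.
   Context: For each $\sigma>0$ such a solution $u_\sigma$ exists and is unique; it satisfies $u_\sigma(x)>\sigma x$ and $|u_\sigma(x)-\sigma x|=O(1/x)$ as $x\to\infty$. *)

theory Defs
  imports "HOL-Analysis.Analysis"
begin

definition shrinker_soln :: "nat \<Rightarrow> real \<Rightarrow> (real \<Rightarrow> real) \<Rightarrow> (real \<Rightarrow> real) \<Rightarrow> (real \<Rightarrow> real) \<Rightarrow> bool" where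
  "shrinker_soln n \<sigma> u u' u'' \<longleftrightarrow>
     (\<forall>x\<ge>0. u x > 0
        \<and> (u has_real_derivative u' x) (at x within {0..})
        \<and> (u' has_real_derivative u'' x) (at x within {0..})
        \<and> u'' x = ((x * u' x - u x) / 2 + (real n - 1) / u x) * (1 + (u' x)\<^sup>2))
     \<and> ((\<lambda>x. u x - \<sigma> * x) \<longlongrightarrow> 0) at_top"

end

theory Submission
  imports Defs "HOL-Real_Asymp.Real_Asymp"
begin

text \<open>Write \<open>w = x u' - u\<close>. At a zero of \<open>w\<close> the equation gives \<open>u'' > 0\<close>, hence \<open>w' = x u'' > 0\<close>;
  so once positive, \<open>w\<close> stays positive and increases, making \<open>u\<close> uniformly convex, which is
  incompatible with \<open>u - \<sigma>x \<longrightarrow> 0\<close>. Thus \<open>w \<le> 0\<close>, so \<open>u/x\<close> decreases to \<open>\<sigma>\<close> and \<open>u \<ge> \<sigma>x\<close>; in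
  particular \<open>u' > 0\<close> beyond \<open>2n/\<sigma>\<close>, since \<open>u'' < 0\<close> at critical points there.
  If \<open>u'\<close> vanished, take the last critical point \<open>c\<close>. After \<open>c\<close> the quantity
  \<open>ln(1 + u'\<^sup>2) - 2(n-1) ln u\<close>, whose derivative is \<open>u' w \<le> 0\<close>, decreases, so \<open>u' \<le> 2\<^sup>n\<^sup>-\<^sup>1\<close>
  until \<open>u\<close> reaches \<open>2 u(c)\<close> at some \<open>b\<close>. Then \<open>u(c) \<le> 2\<^sup>n\<^sup>-\<^sup>1 b\<close> and \<open>\<sigma> b \<le> u(b) = 2 u(c)\<close>,
  whence \<open>\<sigma> \<le> 2\<^sup>n\<close>.\<close>

lemma negative_persists:
  fixes f f' :: "real \<Rightarrow> real"
  assumes ab: "a < b" and fa: "f a < 0" and cont: "continuous_on {a..b} f"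
    and zero_deriv: "\<And>x. a < x \<Longrightarrow> x \<le> b \<Longrightarrow> f x = 0 \<Longrightarrow>
      (f has_real_derivative f' x) (at x) \<and> f' x < 0"
  shows "f b < 0"
proof (rule ccontr)
  assume "\<not> f b < 0"
  define T where "T = {a..b} \<inter> f -` {0..}"
  have "closed T" unfolding T_def by (rule continuous_closed_preimage[OF cont]) auto
  moreover have "b \<in> T" using \<open>\<not> f b < 0\<close> ab by (auto simp: T_def)
  moreover have bdd: "bdd_below T" unfolding T_def by (rule bdd_belowI[of _ a]) auto
  ultimately have "Inf T \<in> T" using closed_contains_Inf by blast
  then obtain q where q: "q = Inf T" "a \<le> q" "q \<le> b" "f q \<ge> 0" by (auto simp: T_def)
  have before_q: "f x < 0" if "a \<le> x" "x < q" for x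
  proof (rule ccontr)
    assume "\<not> f x < 0"
    hence "x \<in> T" using that q by (auto simp: T_def)
    hence "q \<le> x" unfolding q(1) using bdd by (rule cInf_lower)
    thus False using that by simp
  qed
  have "q > a" using q fa by (cases "q = a") auto
  have "continuous_on {a..q} f" using q by (intro continuous_on_subset[OF cont]) auto
  then obtain y where "a \<le> y" "y \<le> q" "f y = 0" using IVT'[of f a 0 q] fa q \<open>q > a\<close> by auto
  hence fq: "f q = 0" using before_q[of y] by force
  obtain d where d: "d > 0" "\<And>h. h > 0 \<Longrightarrow> h < d \<Longrightarrow> f q < f (q - h)"
    using zero_deriv[OF \<open>q > a\<close> q(3) fq] DERIV_neg_dec_left by blast
  define h where "h = min (d/2) ((q - a)/2)"
  have "h > 0" "h < d" "h \<le> (q - a)/2" using d \<open>q > a\<close> by (auto simp: h_def min_def)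
  hence "f q < f (q - h)" "f (q - h) < 0" using d(2) before_q[of "q - h"] by auto
  thus False using fq by simp
qed

lemma nonpositive_becomes_negative:
  fixes f f' :: "real \<Rightarrow> real"
  assumes ab: "a < b" and fa: "f a \<le> 0" and cont: "continuous_on {a..b} f"
    and zero_deriv: "\<And>x. a \<le> x \<Longrightarrow> x \<le> b \<Longrightarrow> f x = 0 \<Longrightarrow>
      (f has_real_derivative f' x) (at x) \<and> f' x < 0"
  shows "f b < 0"
proof (cases "f a < 0")
  case True
  show ?thesis by (rule negative_persists[OF ab True cont, of f']) (use zero_deriv in auto)
next
  case False
  hence fa0: "f a = 0" using fa by simp
  obtain d where d: "d > 0" "\<And>h. h > 0 \<Longrightarrow> h < d \<Longrightarrow> f (a + h) < f a"
    using zero_deriv[of a] ab fa0 DERIV_neg_dec_right by (metis order.refl less_imp_le)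
  define h where "h = min (d/2) ((b - a)/2)"
  have h: "h > 0" "h < d" "a + h < b" using d ab by (auto simp: h_def min_def field_simps)
  show ?thesis
  proof (rule negative_persists[where f = f and a = "a + h" and b = b and f' = f'])
    show "f (a + h) < 0" using d(2) h fa0 by auto
    show "continuous_on {a + h..b} f" using h by (intro continuous_on_subset[OF cont]) auto
  qed (use zero_deriv h in auto)
qed

lemma taylor_lower_bound_second_order:
  fixes f f' f'' :: "real \<Rightarrow> real"
  assumes "a \<le> x"
    and cont: "continuous_on {a..x} f" "continuous_on {a..x} f'"
    and deriv: "\<And>t. a < t \<Longrightarrow> t < x \<Longrightarrow> (f has_real_derivative f' t) (at t)"
      "\<And>t. a < t \<Longrightarrow> t < x \<Longrightarrow> (f' has_real_derivative f'' t) (at t)"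
    and convex: "\<And>t. a < t \<Longrightarrow> t < x \<Longrightarrow> f'' t \<ge> c"
  shows "f x \<ge> f a + f' a * (x - a) + c / 2 * (x - a)\<^sup>2"
proof -
  have f'_ge: "f' t \<ge> f' a + c * (t - a)" if "a \<le> t" "t \<le> x" for t
  proof -
    have "f' a - c * a \<le> f' t - c * t"
    proof (rule DERIV_nonneg_imp_increasing_open[of a t "\<lambda>t. f' t - c * t", simplified])
      fix s assume "a < s" "s < t"
      thus "\<exists>y. ((\<lambda>t. f' t - c * t) has_real_derivative y) (at s) \<and> 0 \<le> y"
        using deriv(2)[of s] convex[of s] that by (auto intro!: derivative_eq_intros)
    qed (use that cont in \<open>auto intro!: continuous_intros elim: continuous_on_subset\<close>)
    thus ?thesis by (simp add: algebra_simps)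
  qed
  define g where "g t = f t - f' a * (t - a) - c / 2 * (t - a)\<^sup>2" for t
  have "g a \<le> g x"
  proof (rule DERIV_nonneg_imp_increasing_open[OF \<open>a \<le> x\<close>])
    fix s assume "a < s" "s < x"
    hence "(g has_real_derivative f' s - f' a - c * (s - a)) (at s)"
      unfolding g_def using deriv(1)[of s] by (auto intro!: derivative_eq_intros)
    thus "\<exists>y. (g has_real_derivative y) (at s) \<and> 0 \<le> y"
      using f'_ge[of s] \<open>a < s\<close> \<open>s < x\<close> by force
  qed (use cont in \<open>auto simp: g_def intro!: continuous_intros\<close>)
  thus ?thesis by (simp add: g_def)
qed

lemma not_asymptotically_linear_if_uniformly_convex:
  fixes f f' f'' :: "real \<Rightarrow> real"
  assumes lim: "((\<lambda>x. f x - \<sigma> * x) \<longlongrightarrow> 0) at_top" and "c > 0"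
    and cont: "continuous_on {a..} f" "continuous_on {a..} f'"
    and deriv: "\<And>t. a < t \<Longrightarrow> (f has_real_derivative f' t) (at t)"
      "\<And>t. a < t \<Longrightarrow> (f' has_real_derivative f'' t) (at t)"
    and convex: "\<And>t. a < t \<Longrightarrow> f'' t \<ge> c"
  shows False
proof -
  have "eventually (\<lambda>x. f a + f' a * (x - a) + c / 2 * (x - a)\<^sup>2 - \<sigma> * x \<le> f x - \<sigma> * x) at_top"
    using eventually_ge_at_top[of a]
  proof eventually_elim
    case (elim x)
    have "continuous_on {a..x} f" "continuous_on {a..x} f'"
      using cont by (auto elim: continuous_on_subset)
    thus ?case using taylor_lower_bound_second_order[OF elim, of f f' f'' c] deriv convex
      by simp
  qed
  moreover have "filterlim (\<lambda>x. f a + f' a * (x - a) + c / 2 * (x - a)\<^sup>2 - \<sigma> * x) at_top at_top"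
    using \<open>c > 0\<close> by real_asymp
  ultimately have "filterlim (\<lambda>x. f x - \<sigma> * x) at_top at_top"
    by (rule filterlim_at_top_mono[rotated])
  thus False
    using not_tendsto_and_filterlim_at_infinity[OF _ lim] filterlim_at_top_imp_at_infinity by auto
qed

locale shrinker =
  fixes n :: nat and \<sigma> :: real and u u' u'' :: "real \<Rightarrow> real"
  assumes n_ge_2: "n \<ge> 2" and soln: "shrinker_soln n \<sigma> u u' u''"
begin

lemma u_pos: "x \<ge> 0 \<Longrightarrow> u x > 0"
  using soln unfolding shrinker_soln_def by auto

lemma u''_eq: "x \<ge> 0 \<Longrightarrow> u'' x = ((x * u' x - u x) / 2 + (real n - 1) / u x) * (1 + (u' x)\<^sup>2)"
  using soln unfolding shrinker_soln_def by auto

lemma u_minus_ray_tendsto: "((\<lambda>x. u x - \<sigma> * x) \<longlongrightarrow> 0) at_top"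
  using soln unfolding shrinker_soln_def by auto

lemma has_derivatives_within:
  "x \<ge> 0 \<Longrightarrow> (u has_real_derivative u' x) (at x within {0..})"
  "x \<ge> 0 \<Longrightarrow> (u' has_real_derivative u'' x) (at x within {0..})"
  using soln unfolding shrinker_soln_def by auto

lemma has_derivatives:
  assumes "x > 0"
  shows "(u has_real_derivative u' x) (at x)" "(u' has_real_derivative u'' x) (at x)"
proof -
  have "x \<ge> 0" and sub: "{0<..} \<subseteq> {0::real..}" using assms by auto
  have at_x: "at x within {0<..} = at x" using assms by (intro at_within_open) auto
  show "(u has_real_derivative u' x) (at x)"
    using DERIV_subset[OF has_derivatives_within(1)[OF \<open>x \<ge> 0\<close>] sub] unfolding at_x .
  show "(u' has_real_derivative u'' x) (at x)"
    using DERIV_subset[OF has_derivatives_within(2)[OF \<open>x \<ge> 0\<close>] sub] unfolding at_x .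
qed

lemma continuous_on_u: "A \<subseteq> {0..} \<Longrightarrow> continuous_on A u"
  using DERIV_continuous_on[of "{0..}" u u'] has_derivatives_within(1)
  by (auto elim: continuous_on_subset)

lemma continuous_on_u': "A \<subseteq> {0..} \<Longrightarrow> continuous_on A u'"
  using DERIV_continuous_on[of "{0..}" u' u''] has_derivatives_within(2)
  by (auto elim: continuous_on_subset)

lemma mult_u'_le_u:
  assumes "x0 \<ge> 0"
  shows "x0 * u' x0 \<le> u x0"
proof (rule ccontr)
  define w where "w x = x * u' x - u x" for x
  assume "\<not> x0 * u' x0 \<le> u x0"
  hence w_x0: "w x0 > 0" by (simp add: w_def)
  have "x0 \<noteq> 0" using w_x0 u_pos[of 0] by (auto simp: w_def)
  hence "x0 > 0" using assms by simp
  have w_deriv: "(w has_real_derivative x * u'' x) (at x)" if "x > 0" for x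
    unfolding w_def using has_derivatives[OF that] by (auto intro!: derivative_eq_intros)
  have continuous_w: "continuous_on {x0..x} w" for x
    unfolding w_def using assms by (auto intro!: continuous_intros continuous_on_u continuous_on_u')
  have u''_w: "u'' x = (w x / 2 + (real n - 1) / u x) * (1 + (u' x)\<^sup>2)" if "x \<ge> 0" for x
    using u''_eq[OF that] by (simp add: w_def)
  have n_term_pos: "(real n - 1) / u x > 0" if "x \<ge> 0" for x
    using u_pos[OF that] n_ge_2 by simp
  have w_pos: "w x > 0" if "x \<ge> x0" for x
  proof (cases "x = x0")
    case False
    \<comment> \<open>At a zero of \<open>w\<close> the equation gives \<open>u'' > 0\<close>, so \<open>w' = x u''\<close> is positive there.\<close>
    have "- w x < 0"
    proof (rule negative_persists[where f = "\<lambda>x. - w x" and f' = "\<lambda>x. - (x * u'' x)"])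
      fix t assume t: "x0 < t" "t \<le> x" "- w t = 0"
      hence "t > 0" using \<open>x0 > 0\<close> by simp
      have "(real n - 1) / u t * (1 + (u' t)\<^sup>2) > 0"
        using n_term_pos[of t] \<open>t > 0\<close> by (intro mult_pos_pos) (auto intro: add_pos_nonneg)
      hence "u'' t > 0" using u''_w[of t] t \<open>t > 0\<close> by simp
      thus "((\<lambda>x. - w x) has_real_derivative - (t * u'' t)) (at t) \<and> - (t * u'' t) < 0"
        using w_deriv[OF \<open>t > 0\<close>] \<open>t > 0\<close> by (auto intro!: derivative_eq_intros)
    qed (use False that w_x0 continuous_w in \<open>auto intro!: continuous_intros\<close>)
    thus ?thesis by simp
  qed (use w_x0 in simp)
  have u''_ge_w: "u'' x \<ge> w x / 2" if "x \<ge> x0" for x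
  proof -
    have "x \<ge> 0" using that assms by simp
    have "w x / 2 + (real n - 1) / u x \<le> (w x / 2 + (real n - 1) / u x) * (1 + (u' x)\<^sup>2)"
      using w_pos[OF that] n_term_pos[OF \<open>x \<ge> 0\<close>] by (intro mult_le_cancel_left1[THEN iffD2]) auto
    thus ?thesis using u''_w[OF \<open>x \<ge> 0\<close>] n_term_pos[OF \<open>x \<ge> 0\<close>] by linarith
  qed
  have w_ge: "w x \<ge> w x0" if "x \<ge> x0" for x
  proof (rule DERIV_nonneg_imp_increasing_open[OF that])
    fix t assume "x0 < t" "t < x"
    thus "\<exists>d. (w has_real_derivative d) (at t) \<and> 0 \<le> d"
      using w_deriv[of t] u''_ge_w[of t] w_pos[of t] \<open>x0 > 0\<close> by force
  qed (rule continuous_w)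
  \<comment> \<open>So \<open>u'' \<ge> w(x\<^sub>0)/2 > 0\<close> on \<open>[x\<^sub>0, \<infinity>)\<close>, which is incompatible with asymptotic linearity.\<close>
  show False
  proof (rule not_asymptotically_linear_if_uniformly_convex
      [OF u_minus_ray_tendsto, of "w x0 / 2" x0 u' u''])
    show "continuous_on {x0..} u" "continuous_on {x0..} u'"
      using assms by (auto intro!: continuous_on_u continuous_on_u')
    show "w x0 / 2 \<le> u'' t" if "x0 < t" for t
      using u''_ge_w[of t] w_ge[of t] that by simp
  qed (use w_x0 \<open>x0 > 0\<close> has_derivatives in auto)
qed

lemma ray_le_u:
  assumes "x \<ge> 0"
  shows "\<sigma> * x \<le> u x"
proof (rule ccontr)
  assume "\<not> \<sigma> * x \<le> u x"
  hence "u x < \<sigma> * x" by simp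
  have "x \<noteq> 0" using \<open>u x < \<sigma> * x\<close> u_pos[of 0] by auto
  hence "x > 0" using assms by simp
  define \<epsilon> where "\<epsilon> = \<sigma> - u x / x"
  have "\<epsilon> > 0" using \<open>u x < \<sigma> * x\<close> \<open>x > 0\<close> by (simp add: \<epsilon>_def field_simps)
  have ratio_antimono: "u y / y \<le> u x / x" if "y \<ge> x" for y
  proof (rule DERIV_nonpos_imp_decreasing_open[OF that])
    fix z assume "x < z" "z < y"
    hence "z > 0" using \<open>x > 0\<close> by simp
    have "((\<lambda>x. u x / x) has_real_derivative (z * u' z - u z) / z\<^sup>2) (at z)"
      using has_derivatives(1)[OF \<open>z > 0\<close>] \<open>z > 0\<close>
      by (auto intro!: derivative_eq_intros simp: field_simps power2_eq_square)
    moreover have "(z * u' z - u z) / z\<^sup>2 \<le> 0"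
      using mult_u'_le_u[of z] \<open>z > 0\<close> by (simp add: divide_nonpos_pos)
    ultimately show "\<exists>d. ((\<lambda>x. u x / x) has_real_derivative d) (at z) \<and> d \<le> 0" by blast
  qed (use \<open>x > 0\<close> in \<open>auto intro!: continuous_intros continuous_on_u\<close>)
  have "eventually (\<lambda>y. u y - \<sigma> * y > - (\<epsilon> * x)) at_top"
    using order_tendstoD(1)[OF u_minus_ray_tendsto] \<open>\<epsilon> > 0\<close> \<open>x > 0\<close> by simp
  moreover have "eventually (\<lambda>y. u y - \<sigma> * y \<le> - (\<epsilon> * x)) at_top"
    using eventually_ge_at_top[of x]
  proof eventually_elim
    case (elim y)
    hence "u y \<le> (\<sigma> - \<epsilon>) * y"
      using ratio_antimono[OF elim] \<open>x > 0\<close> by (simp add: \<epsilon>_def field_simps)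
    moreover have "\<epsilon> * x \<le> \<epsilon> * y" using elim \<open>\<epsilon> > 0\<close> by simp
    ultimately show ?case by (simp add: algebra_simps)
  qed
  ultimately have "eventually (\<lambda>_. False) (at_top :: real filter)"
    by eventually_elim simp
  thus False by simp
qed

lemma u'_pos_beyond:
  assumes "\<sigma> > 0" and "\<sigma> * x > 2 * real n"
  shows "u' x > 0"
proof (rule ccontr)
  assume "\<not> u' x > 0"
  have "x > 0" using assms n_ge_2 zero_less_mult_pos[of \<sigma> x] by simp
  \<comment> \<open>Once \<open>u' \<le> 0\<close>, every later zero of \<open>u'\<close> has \<open>u'' = -u/2 + (n-1)/u < 0\<close> since \<open>u \<ge> \<sigma>x > 2n\<close>.\<close>
  have u'_neg: "u' b < 0" if "b > x" for b
  proof (rule nonpositive_becomes_negative[where f = u' and f' = u''])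
    fix t assume t: "x \<le> t" "t \<le> b" "u' t = 0"
    hence "t > 0" using \<open>x > 0\<close> by simp
    have "\<sigma> * x \<le> \<sigma> * t" using t \<open>\<sigma> > 0\<close> by simp
    hence "u t > 2 * real n" using ray_le_u[of t] \<open>t > 0\<close> assms(2) by linarith
    hence "(real n - 1) / u t < 1" "u t / 2 > 1" using n_ge_2 by (simp_all add: divide_less_eq)
    moreover have "u'' t = (real n - 1) / u t - u t / 2" using u''_eq[of t] \<open>t > 0\<close> t(3) by simp
    ultimately have "u'' t < 0" by linarith
    thus "(u' has_real_derivative u'' t) (at t) \<and> u'' t < 0"
      using has_derivatives(2)[OF \<open>t > 0\<close>] by simp
  qed (use that \<open>\<not> u' x > 0\<close> \<open>x > 0\<close> in \<open>auto intro!: continuous_on_u'\<close>)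
  define B where "B = x + u x / \<sigma> + 1"
  have "u x / \<sigma> > 0" using u_pos[of x] \<open>x > 0\<close> \<open>\<sigma> > 0\<close> by simp
  hence "x < B" by (simp add: B_def)
  have "u B \<le> u x"
  proof (rule DERIV_nonpos_imp_decreasing_open[of x B u])
    fix z assume "x < z" "z < B"
    thus "\<exists>d. (u has_real_derivative d) (at z) \<and> d \<le> 0"
      using has_derivatives(1)[of z] u'_neg[of z] \<open>x > 0\<close> by force
  qed (use \<open>x < B\<close> \<open>x > 0\<close> in \<open>auto intro!: continuous_on_u\<close>)
  moreover have "\<sigma> * B = \<sigma> * x + u x + \<sigma>" using \<open>\<sigma> > 0\<close> by (simp add: B_def field_simps)
  ultimately show False using ray_le_u[of B] \<open>x < B\<close> \<open>x > 0\<close> \<open>\<sigma> > 0\<close> assms(2) n_ge_2 by linarith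
qed

definition energy :: "real \<Rightarrow> real" where
  "energy x = ln (1 + (u' x)\<^sup>2) - 2 * (real n - 1) * ln (u x)"

lemma energy_has_derivative:
  assumes "x > 0"
  shows "(energy has_real_derivative u' x * (x * u' x - u x)) (at x)"
proof -
  have "u x > 0" "1 + (u' x)\<^sup>2 > 0" using u_pos assms by (auto intro: add_pos_nonneg)
  have "(energy has_real_derivative
      2 * u' x * (u'' x / (1 + (u' x)\<^sup>2)) - 2 * (real n - 1) * (u' x / u x)) (at x)"
    unfolding energy_def[abs_def] using has_derivatives[OF assms] \<open>u x > 0\<close> \<open>1 + (u' x)\<^sup>2 > 0\<close>
    by (auto intro!: derivative_eq_intros simp: power2_eq_square) (simp add: mult_ac)
  moreover have "u'' x / (1 + (u' x)\<^sup>2) = (x * u' x - u x) / 2 + (real n - 1) / u x"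
    using u''_eq[of x] assms \<open>1 + (u' x)\<^sup>2 > 0\<close> by simp
  hence "2 * u' x * (u'' x / (1 + (u' x)\<^sup>2)) - 2 * (real n - 1) * (u' x / u x)
      = 2 * u' x * ((x * u' x - u x) / 2 + (real n - 1) / u x) - 2 * (real n - 1) * (u' x / u x)"
    by (simp only:)
  also have "\<dots> = u' x * (x * u' x - u x)" using \<open>u x > 0\<close> by (simp add: field_simps)
  ultimately show ?thesis by simp
qed

lemma energy_antimono:
  assumes "0 \<le> c" "c \<le> x" and u'_nonneg: "\<And>t. c < t \<Longrightarrow> t < x \<Longrightarrow> u' t \<ge> 0"
  shows "energy x \<le> energy c"
proof (rule DERIV_nonpos_imp_decreasing_open[OF \<open>c \<le> x\<close>])
  fix t assume "c < t" "t < x"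
  hence "t > 0" using assms by simp
  have "u' t * (t * u' t - u t) \<le> 0"
    using u'_nonneg[OF \<open>c < t\<close> \<open>t < x\<close>] mult_u'_le_u[of t] \<open>t > 0\<close> by (simp add: mult_nonneg_nonpos)
  thus "\<exists>d. (energy has_real_derivative d) (at t) \<and> d \<le> 0"
    using energy_has_derivative[OF \<open>t > 0\<close>] by blast
next
  have "u t \<noteq> 0" "1 + (u' t)\<^sup>2 \<noteq> 0" if "t \<in> {c..x}" for t
    using u_pos[of t] that assms by (auto simp: add_nonneg_eq_0_iff)
  thus "continuous_on {c..x} energy"
    unfolding energy_def using assms
    by (auto intro!: continuous_intros continuous_on_u continuous_on_u')
qed

lemma slope_bound_after_critical_point:
  assumes "0 \<le> c" "c \<le> x" "u' c = 0" "\<And>t. c < t \<Longrightarrow> t < x \<Longrightarrow> u' t \<ge> 0"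
    and "u x \<le> 2 * u c"
  shows "u' x \<le> 2 ^ (n - 1)"
proof -
  have "u c > 0" "u x > 0" using u_pos assms by auto
  have "ln (1 + (u' x)\<^sup>2) \<le> 2 * (real n - 1) * (ln (u x) - ln (u c))"
    using energy_antimono[OF assms(1-2,4)] \<open>u' c = 0\<close> by (simp add: energy_def algebra_simps)
  also have "\<dots> \<le> 2 * (real n - 1) * ln 2"
  proof -
    have "ln (u x) \<le> ln (2 * u c)" using \<open>u c > 0\<close> \<open>u x > 0\<close> \<open>u x \<le> 2 * u c\<close> by simp
    hence "ln (u x) - ln (u c) \<le> ln 2" using \<open>u c > 0\<close> by (simp add: ln_mult)
    thus ?thesis using n_ge_2 by (intro mult_left_mono) auto
  qed
  also have "\<dots> = ln ((2 ^ (n - 1))\<^sup>2)"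
    using n_ge_2 by (simp add: ln_realpow of_nat_diff power_mult[symmetric])
  finally have "(u' x)\<^sup>2 \<le> (2 ^ (n - 1))\<^sup>2"
    by (subst (asm) ln_le_cancel_iff) (auto intro: add_pos_nonneg)
  thus ?thesis by (rule power2_le_imp_le) simp
qed

lemma last_critical_point:
  assumes "\<sigma> > 0" "x \<ge> 0" "u' x \<le> 0"
  obtains c where "c \<ge> 0" "u' c = 0" "\<And>t. t > c \<Longrightarrow> u' t > 0"
proof -
  define S where "S = {0..} \<inter> u' -` {..0}"
  have "closed S" unfolding S_def by (rule continuous_closed_preimage) (auto intro: continuous_on_u')
  moreover have "x \<in> S" using assms by (simp add: S_def)
  moreover have bdd: "bdd_above S"
  proof (rule bdd_aboveI[of _ "2 * real n / \<sigma>"])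
    fix t assume "t \<in> S"
    hence "\<not> \<sigma> * t > 2 * real n" using u'_pos_beyond[OF \<open>\<sigma> > 0\<close>] by (force simp: S_def)
    thus "t \<le> 2 * real n / \<sigma>" using \<open>\<sigma> > 0\<close> by (simp add: field_simps)
  qed
  ultimately have "Sup S \<in> S" using closed_contains_Sup by blast
  then obtain c where c: "c = Sup S" "c \<ge> 0" "u' c \<le> 0" by (auto simp: S_def)
  have after_c: "u' t > 0" if "t > c" for t
  proof (rule ccontr)
    assume "\<not> u' t > 0"
    hence "t \<in> S" using that c by (auto simp: S_def)
    hence "t \<le> c" unfolding c(1) using bdd by (rule cSup_upper)
    thus False using that by simp
  qed
  obtain y where "c \<le> y" "y \<le> c + 1" "u' y = 0"
    using IVT'[of u' c 0 "c + 1"] c after_c[of "c + 1"] continuous_on_u'[of "{c..c + 1}"] by force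
  hence "u' c = 0" using after_c[of y] by force
  thus thesis using that c(2) after_c by blast
qed

lemma u'_pos:
  assumes "\<sigma> > 2 ^ n" "x \<ge> 0"
  shows "u' x > 0"
proof (rule ccontr)
  assume "\<not> u' x > 0"
  hence "u' x \<le> 0" by simp
  have "\<sigma> > 0" using assms(1) zero_less_power[of "2::real" n] by linarith
  obtain c where c: "c \<ge> 0" "u' c = 0" and after_c: "\<And>t. t > c \<Longrightarrow> u' t > 0"
    using last_critical_point[OF \<open>\<sigma> > 0\<close> assms(2) \<open>u' x \<le> 0\<close>] by blast
  have u_mono: "u s \<le> u t" if "c \<le> s" "s \<le> t" for s t
  proof (rule DERIV_nonneg_imp_increasing_open[OF that(2)])
    fix z assume "s < z" "z < t"
    hence "z > 0" "z > c" using that c by auto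
    thus "\<exists>d. (u has_real_derivative d) (at z) \<and> d \<ge> 0"
      using has_derivatives(1) after_c less_imp_le by blast
  qed (use that c in \<open>auto intro!: continuous_on_u\<close>)
  \<comment> \<open>\<open>u\<close> reaches \<open>2 u(c)\<close> by \<open>B\<close>, because \<open>u \<ge> \<sigma>x\<close>.\<close>
  define B where "B = c + 2 * u c / \<sigma>"
  have "u c > 0" using u_pos[OF c(1)] .
  have "c \<le> B" using \<open>u c > 0\<close> \<open>\<sigma> > 0\<close> by (simp add: B_def)
  have "\<sigma> * B = \<sigma> * c + 2 * u c" using \<open>\<sigma> > 0\<close> by (simp add: B_def field_simps)
  moreover have "\<sigma> * B \<le> u B" using ray_le_u \<open>c \<le> B\<close> c by simp
  ultimately have "2 * u c \<le> u B" using \<open>\<sigma> > 0\<close> c mult_nonneg_nonneg[of \<sigma> c] by linarith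
  hence "\<exists>b\<ge>c. b \<le> B \<and> u b = 2 * u c"
    using \<open>c \<le> B\<close> \<open>u c > 0\<close> c by (intro IVT') (auto intro: continuous_on_u)
  then obtain b where b: "c \<le> b" "b \<le> B" "u b = 2 * u c" by blast
  have "c < b" using b \<open>u c > 0\<close> by (cases "b = c") auto
  define K :: real where "K = 2 ^ (n - 1)"
  have slope_le_K: "u' z \<le> K" if "c < z" "z < b" for z
  proof -
    have "u z \<le> 2 * u c" using u_mono[of z b] that b by simp
    moreover have "u' t \<ge> 0" if "c < t" for t using after_c[OF that] by simp
    ultimately show ?thesis
      unfolding K_def using slope_bound_after_critical_point[of c z] c that by simp
  qed
  have "K * c - u c \<le> K * b - u b"
  proof (rule DERIV_nonneg_imp_increasing_open[of c b "\<lambda>x. K * x - u x", simplified])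
    fix z assume "c < z" "z < b"
    hence "((\<lambda>x. K * x - u x) has_real_derivative K - u' z) (at z)"
      using has_derivatives(1)[of z] c by (auto intro!: derivative_eq_intros)
    thus "\<exists>y. ((\<lambda>x. K * x - u x) has_real_derivative y) (at z) \<and> 0 \<le> y"
      using slope_le_K[OF \<open>c < z\<close> \<open>z < b\<close>] by force
  qed (use c \<open>c < b\<close> in \<open>auto intro!: continuous_intros continuous_on_u\<close>)
  hence "u c \<le> K * b - K * c" using b by simp
  also have "\<dots> \<le> K * b" using c by (simp add: K_def)
  finally have "u c \<le> K * b" .
  have "\<sigma> * u c \<le> K * (\<sigma> * b)" using \<open>u c \<le> K * b\<close> \<open>\<sigma> > 0\<close> by simp
  also have "\<dots> \<le> K * (2 * u c)"
    using ray_le_u[of b] b c by (intro mult_left_mono) (auto simp: K_def)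
  also have "\<dots> = 2 ^ n * u c" using n_ge_2 by (simp add: K_def power_eq_if)
  finally show False using assms(1) \<open>u c > 0\<close> by simp
qed

end

theorem lemma7:
  fixes n :: nat
  assumes "n \<ge> 2"
  shows "\<exists>\<Sigma>::real. \<forall>\<sigma>>\<Sigma>. \<forall>u u' u''. shrinker_soln n \<sigma> u u' u'' \<longrightarrow> (\<forall>x\<ge>0. u' x > 0)"
proof (intro exI[of _ "2 ^ n"] allI impI)
  fix \<sigma> :: real and u u' u'' :: "real \<Rightarrow> real" and x :: real
  assume "\<sigma> > 2 ^ n" "shrinker_soln n \<sigma> u u' u''" "x \<ge> 0"
  thus "u' x > 0" using shrinker.u'_pos[OF shrinker.intro[OF assms]] by blast
qed

end
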